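(* Let $f$ be as in the standing setting and satisfy quadratic functional growth with constant $\kappa_f>0$: $f(x)-f^*\ge\frac{\kappa_f}{2}\|x-\bar x\|^2$ for all $x\in X$. Let $x^0\in X$ and $x^{k+1}=[x^k-\frac1{L_f}\nabla f(x^k)]_X$ for $k\ge0$, and $\bar x^k=[x^k]_{X^*}$. Then, with $\mu_f=\kappa_f/L_f$, $$\|x^k-\bar x^k\|^2\le\left(\frac{1}{1+\mu_f}\right)^k\|x^0-\bar x^0\|^2\qquad\forall k\ge0.$$
   Context: Standing setting: $X\subseteq\mathbb{R}^n$ is a nonempty closed convex set; $f:X\to\mathbb{R}$ is convex and continuously differentiable, with $L_f$-Lipschitz continuous gradient on $X$ ($L_f>0$). Consider $f^*=\min_{x\in X}f(x)$ with optimal set $X^*$ nonempty and closed and $f^*$ finite. $\|\cdot\|$ is the Euclidean norm, $[u]_S$ is the Euclidean projection onto a closed convex set $S$, and $\bar x=[x]_{X^*}$. *)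

theory Defs
  imports "HOL-Analysis.Analysis"
begin

end

theory Submission imports Defs begin

text \<open>Three facts about one projected gradient step \<open>y' = [y - \<nabla>f(y)/L]\<^sub>X\<close> combine
  into \<open>f(y') - f(z) \<le> L/2 (\<parallel>y - z\<parallel>\<^sup>2 - \<parallel>y' - z\<parallel>\<^sup>2)\<close> for every \<open>z \<in> X\<close>: the quadratic
  upper bound given by the Lipschitz gradient at \<open>y\<close>, the tangent-plane lower bound of the
  convex \<open>f\<close> at \<open>y\<close>, and the variational inequality characterising the projection.
  Taking \<open>z = [y]\<^sub>X\<^sub>*\<close>, the left side is at least \<open>\<kappa>/2 dist(y', X\<^sup>*)\<^sup>2\<close> by quadratic growth,
  and \<open>\<parallel>y' - z\<parallel> \<ge> dist(y', X\<^sup>*)\<close>; hence \<open>(\<kappa> + L) dist(y', X\<^sup>*)\<^sup>2 \<le> L dist(y, X\<^sup>*)\<^sup>2\<close>,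
  and the geometric decay follows by induction.\<close>

lemma convex_line_point:
  assumes "convex X" "x \<in> X" "z \<in> X" "t \<in> {0..1}"
  shows "x + t *\<^sub>R (z - x) \<in> X"
proof -
  have "x + t *\<^sub>R (z - x) = (1 - t) *\<^sub>R x + t *\<^sub>R z" by (simp add: algebra_simps)
  then show ?thesis using assms by (simp add: convex_def)
qed

lemma has_derivative_along_segment:
  fixes f :: "'a::real_inner \<Rightarrow> real"
  assumes "convex X" "x \<in> X" "z \<in> X" "t \<in> {0..1}"
    and f_grad: "\<And>y. y \<in> X \<Longrightarrow> (f has_derivative (\<lambda>h. g y \<bullet> h)) (at y within X)"
  shows "((\<lambda>t. f (x + t *\<^sub>R (z - x))) has_derivative
           (\<lambda>s. s * (g (x + t *\<^sub>R (z - x)) \<bullet> (z - x)))) (at t within {0..1})"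
proof -
  let ?l = "\<lambda>t. x + t *\<^sub>R (z - x)"
  have segment: "?l ` {0..1} \<subseteq> X" using convex_line_point[OF assms(1-3)] by blast
  have line: "(?l has_derivative (\<lambda>s. s *\<^sub>R (z - x))) (at t within {0..1})"
    by (auto intro!: derivative_eq_intros)
  have "(f has_derivative (\<lambda>h. g (?l t) \<bullet> h)) (at (?l t) within ?l ` {0..1})"
    using f_grad segment assms(4) by (meson has_derivative_subset image_subset_iff)
  from diff_chain_within[OF line this] show ?thesis by (simp add: o_def)
qed

lemma convex_on_gradient_inequality:
  fixes f :: "'a::real_inner \<Rightarrow> real"
  assumes "convex X" "x \<in> X" "z \<in> X" "convex_on X f"
    and f_grad: "\<And>y. y \<in> X \<Longrightarrow> (f has_derivative (\<lambda>h. g y \<bullet> h)) (at y within X)"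
  shows "f x + g x \<bullet> (z - x) \<le> f z"
proof -
  define \<phi> where "\<phi> t = f (x + t *\<^sub>R (z - x))" for t
  define D where "D = g x \<bullet> (z - x)"
  have "(\<phi> has_derivative (\<lambda>s. s * D)) (at 0 within {0..1})"
    unfolding \<phi>_def D_def using has_derivative_along_segment[OF assms(1-3) _ f_grad, of 0] by simp
  moreover have "(\<lambda>s. s * D) = (*) D" by (auto simp: mult.commute)
  ultimately have "(\<phi> has_field_derivative D) (at 0 within {0..1})"
    by (simp add: has_field_derivative_def)
  then have slope_lim: "((\<lambda>t. (\<phi> t - \<phi> 0) / (t - 0)) \<longlongrightarrow> D) (at_right 0)"
    by (simp add: has_field_derivative_iff at_within_Icc_at_right)
  have "\<forall>\<^sub>F t in at_right 0. t \<in> {0<..<1::real}"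
    by (rule eventually_at_right_real) simp
  then have "\<forall>\<^sub>F t in at_right 0. (\<phi> t - \<phi> 0) / (t - 0) \<le> \<phi> 1 - \<phi> 0"
  proof eventually_elim
    case (elim t)
    have "\<phi> t = f ((1 - t) *\<^sub>R x + t *\<^sub>R z)" by (simp add: \<phi>_def algebra_simps)
    also have "\<dots> \<le> (1 - t) * f x + t * f z"
      using convex_onD[OF assms(4)] elim assms(2,3) by auto
    finally have "\<phi> t - \<phi> 0 \<le> t * (\<phi> 1 - \<phi> 0)" by (simp add: \<phi>_def algebra_simps)
    then show ?case using elim by (simp add: divide_le_eq mult.commute)
  qed
  with slope_lim have "D \<le> \<phi> 1 - \<phi> 0" by (rule tendsto_upperbound) simp
  then show ?thesis by (simp add: \<phi>_def D_def)
qed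

text \<open>The descent lemma, proved by the mean value theorem applied to \<open>f\<close> on the segment
  minus its claimed quadratic upper bound.\<close>
lemma lipschitz_gradient_quadratic_upper_bound:
  fixes f :: "'a::real_inner \<Rightarrow> real"
  assumes "convex X" "x \<in> X" "y \<in> X"
    and f_grad: "\<And>y. y \<in> X \<Longrightarrow> (f has_derivative (\<lambda>h. g y \<bullet> h)) (at y within X)"
    and g_lip: "\<And>y z. y \<in> X \<Longrightarrow> z \<in> X \<Longrightarrow> norm (g y - g z) \<le> L * norm (y - z)"
  shows "f y \<le> f x + g x \<bullet> (y - x) + L / 2 * (norm (y - x))\<^sup>2"
proof -
  define l where "l t = x + t *\<^sub>R (y - x)" for t
  define D where "D = g x \<bullet> (y - x)"
  define N where "N = (norm (y - x))\<^sup>2"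
  define \<psi> where "\<psi> t = f (l t) - t * D - L / 2 * t\<^sup>2 * N" for t
  have der: "(\<psi> has_derivative (\<lambda>s. s * (g (l t) \<bullet> (y - x) - D - L * t * N))) (at t within {0..1})"
    if "0 \<le> t" "t \<le> 1" for t
  proof -
    have "((\<lambda>t. f (l t)) has_derivative (\<lambda>s. s * (g (l t) \<bullet> (y - x)))) (at t within {0..1})"
      unfolding l_def using has_derivative_along_segment[OF assms(1-3) _ f_grad] that by auto
    then have "(\<psi> has_derivative
                 (\<lambda>s. s * (g (l t) \<bullet> (y - x)) - s * D - L / 2 * (2 * t * s) * N)) (at t within {0..1})"
      unfolding \<psi>_def by (auto intro!: derivative_eq_intros)
    then show ?thesis by (simp add: algebra_simps)
  qed
  obtain s where s: "s \<in> {0..1}"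
    and mvt: "\<psi> 1 - \<psi> 0 = (1 - 0) * (g (l s) \<bullet> (y - x) - D - L * s * N)"
    using mvt_very_simple[of 0 1 \<psi>, OF _ der] by auto
  have "(g (l s) - g x) \<bullet> (y - x) \<le> norm (g (l s) - g x) * norm (y - x)"
    by (rule norm_cauchy_schwarz)
  also have "\<dots> \<le> L * norm (l s - x) * norm (y - x)"
    using g_lip[OF _ assms(2), of "l s"] convex_line_point[OF assms(1-3) s]
    by (simp add: l_def mult_right_mono)
  also have "\<dots> = L * s * N"
    using s by (simp add: l_def N_def power2_eq_square)
  finally have "g (l s) \<bullet> (y - x) - D - L * s * N \<le> 0"
    by (simp add: D_def inner_diff_left)
  then have "\<psi> 1 \<le> \<psi> 0" using mvt by simp
  then show ?thesis by (simp add: \<psi>_def l_def D_def N_def)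
qed

lemma projected_gradient_step_bound:
  fixes f :: "'a::euclidean_space \<Rightarrow> real"
  assumes "closed X" "convex X" "convex_on X f" "L > 0"
    and f_grad: "\<And>y. y \<in> X \<Longrightarrow> (f has_derivative (\<lambda>h. g y \<bullet> h)) (at y within X)"
    and g_lip: "\<And>y z. y \<in> X \<Longrightarrow> z \<in> X \<Longrightarrow> norm (g y - g z) \<le> L * norm (y - z)"
    and y: "y \<in> X" and z: "z \<in> X"
    and y': "y' = closest_point X (y - (1 / L) *\<^sub>R g y)"
  shows "f y' - f z \<le> L / 2 * ((norm (y - z))\<^sup>2 - (norm (y' - z))\<^sup>2)"
proof -
  have y'X: "y' \<in> X" using y' closest_point_in_set[OF assms(1)] y by blast
  define a where "a = y - y'"
  define b where "b = y' - z"
  have "y' - y = - a" by (simp add: a_def)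
  then have "f y' \<le> f y - g y \<bullet> a + L / 2 * (a \<bullet> a)"
    using lipschitz_gradient_quadratic_upper_bound[OF assms(2) y y'X f_grad g_lip]
    by (simp add: power2_norm_eq_inner)
  moreover have "f y - g y \<bullet> a - g y \<bullet> b \<le> f z"
    using convex_on_gradient_inequality[OF assms(2) y z assms(3) f_grad]
    by (simp add: a_def b_def inner_diff_right)
  moreover have "g y \<bullet> b \<le> L * (a \<bullet> b)"
  proof -
    have "(y - (1 / L) *\<^sub>R g y - y') \<bullet> (z - y') \<le> 0"
      unfolding y' by (rule closest_point_dot[OF assms(2,1) z])
    then have "(1 / L) * (g y \<bullet> b) \<le> a \<bullet> b"
      by (simp add: a_def b_def inner_diff_left inner_diff_right algebra_simps)
    then show ?thesis using \<open>L > 0\<close> by (simp add: field_simps)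
  qed
  ultimately have "f y' - f z \<le> L / 2 * ((a + b) \<bullet> (a + b) - b \<bullet> b)"
    by (simp add: inner_add_left inner_add_right inner_commute algebra_simps)
  moreover have "a + b = y - z" by (simp add: a_def b_def)
  ultimately show ?thesis by (simp only: b_def power2_norm_eq_inner)
qed

lemma projected_gradient_distance_contraction:
  fixes f :: "'a::euclidean_space \<Rightarrow> real"
  assumes "closed X" "convex X" "convex_on X f" "L > 0" "\<kappa> > 0"
    and f_grad: "\<And>y. y \<in> X \<Longrightarrow> (f has_derivative (\<lambda>h. g y \<bullet> h)) (at y within X)"
    and g_lip: "\<And>y z. y \<in> X \<Longrightarrow> z \<in> X \<Longrightarrow> norm (g y - g z) \<le> L * norm (y - z)"
    and S: "closed S" "S \<noteq> {}" "S \<subseteq> X" "\<And>z. z \<in> S \<Longrightarrow> f z = c"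
    and growth: "\<And>y. y \<in> X \<Longrightarrow> f y - c \<ge> \<kappa> / 2 * (norm (y - closest_point S y))\<^sup>2"
    and y: "y \<in> X"
    and y': "y' = closest_point X (y - (1 / L) *\<^sub>R g y)"
  shows "(norm (y' - closest_point S y'))\<^sup>2 \<le> 1 / (1 + \<kappa> / L) * (norm (y - closest_point S y))\<^sup>2"
proof -
  define yb where "yb = closest_point S y"
  define d where "d = norm (y - yb)"
  define d' where "d' = norm (y' - closest_point S y')"
  have yb: "yb \<in> S" unfolding yb_def by (rule closest_point_in_set[OF S(1,2)])
  have y'X: "y' \<in> X" using y' closest_point_in_set[OF assms(1)] y by blast
  have "d' \<le> norm (y' - yb)"
    using closest_point_le[OF S(1) yb, of y'] by (simp add: d'_def dist_norm)
  then have d'_sq: "d'\<^sup>2 \<le> (norm (y' - yb))\<^sup>2" by (simp add: d'_def power_mono)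
  have "\<kappa> / 2 * d'\<^sup>2 \<le> f y' - f yb"
    using growth[OF y'X] S(4)[OF yb] by (simp add: d'_def)
  also have "\<dots> \<le> L / 2 * (d\<^sup>2 - (norm (y' - yb))\<^sup>2)"
    using projected_gradient_step_bound[OF assms(1-4) f_grad g_lip y _ y'] yb S(3)
    by (auto simp: d_def)
  also have "\<dots> \<le> L / 2 * (d\<^sup>2 - d'\<^sup>2)"
    using d'_sq \<open>L > 0\<close> by simp
  finally have "(\<kappa> + L) * d'\<^sup>2 \<le> L * d\<^sup>2" by (simp add: algebra_simps)
  then show ?thesis
    using \<open>\<kappa> > 0\<close> \<open>L > 0\<close> by (simp add: d_def d'_def yb_def field_simps)
qed

lemma le_power_mult_if_step_le:
  fixes a :: "nat \<Rightarrow> 'a::linordered_semiring_1"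
  assumes "r \<ge> 0" "\<And>k. a (Suc k) \<le> r * a k"
  shows "a k \<le> r ^ k * a 0"
proof (induction k)
  case (Suc k)
  have "a (Suc k) \<le> r * a k" by (rule assms(2))
  also have "\<dots> \<le> r * (r ^ k * a 0)" using Suc assms(1) by (rule mult_left_mono)
  finally show ?case by (simp add: mult.assoc)
qed simp

theorem theorem12:
  fixes X :: "'a::euclidean_space set"
    and f :: "'a \<Rightarrow> real"
    and gradf :: "'a \<Rightarrow> 'a"
    and Lf kappa :: real
    and x :: "nat \<Rightarrow> 'a"
  assumes X_closed: "closed X" and X_convex: "convex X" and X_ne: "X \<noteq> {}"
    and f_convex: "convex_on X f"
    and f_grad: "\<And>y. y \<in> X \<Longrightarrow> (f has_derivative (\<lambda>h. gradf y \<bullet> h)) (at y within X)"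
    and grad_cont: "continuous_on X gradf"
    and Lf_pos: "Lf > 0"
    and grad_lip: "\<And>y z. y \<in> X \<Longrightarrow> z \<in> X \<Longrightarrow> norm (gradf y - gradf z) \<le> Lf * norm (y - z)"
    and fstar_bdd: "bdd_below (f ` X)"
    and Xstar_ne: "{y \<in> X. f y = Inf (f ` X)} \<noteq> {}"
    and kappa_pos: "kappa > 0"
    and qfg: "\<And>y. y \<in> X \<Longrightarrow>
      f y - Inf (f ` X) \<ge> kappa / 2 * (norm (y - closest_point {z \<in> X. f z = Inf (f ` X)} y))\<^sup>2"
    and x0: "x 0 \<in> X"
    and x_step: "\<And>k. x (Suc k) = closest_point X (x k - (1 / Lf) *\<^sub>R gradf (x k))"
  shows "\<forall>k. (norm (x k - closest_point {z \<in> X. f z = Inf (f ` X)} (x k)))\<^sup>2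
           \<le> (1 / (1 + kappa / Lf)) ^ k * (norm (x 0 - closest_point {z \<in> X. f z = Inf (f ` X)} (x 0)))\<^sup>2"
proof -
  define S where "S = {z \<in> X. f z = Inf (f ` X)}"
  have "continuous_on X f" using f_grad by (rule has_derivative_continuous_on)
  then have "closed S"
    unfolding S_def using continuous_closed_preimage_constant X_closed by blast
  have x_in_X: "x k \<in> X" for k
    by (cases k) (auto simp: x0 x_step intro!: closest_point_in_set X_closed X_ne)
  have "(norm (x (Suc k) - closest_point S (x (Suc k))))\<^sup>2
          \<le> 1 / (1 + kappa / Lf) * (norm (x k - closest_point S (x k)))\<^sup>2" for k
    using projected_gradient_distance_contraction[OF X_closed X_convex f_convex Lf_pos kappa_pos
            f_grad grad_lip \<open>closed S\<close> _ _ _ _ x_in_X x_step] qfg Xstar_ne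
    unfolding S_def by blast
  then have "(norm (x k - closest_point S (x k)))\<^sup>2
               \<le> (1 / (1 + kappa / Lf)) ^ k * (norm (x 0 - closest_point S (x 0)))\<^sup>2" for k
    using Lf_pos kappa_pos by (intro le_power_mult_if_step_le) auto
  then show ?thesis by (simp add: S_def)
qed

end
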